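(* Let $B$ be a nonempty finite set and $M\subseteq\omega^B$ an upper set. Then the sequence $(\mu_0(M),\mu_1(M),\mu_2(M),\dots)$ is of one of the following forms: (1) $(0,0,\dots)$, which occurs if $M$ is empty; (2) $(0,\dots,0,r_0,\dots,r_{N-1},1,1,\dots)$ for some $N\in\omega$ and reals $0<r_0<\dots<r_{N-1}<1$; (3) $(0,\dots,0,r_0,r_1,\dots)$ for some strictly increasing sequence $(r_i)_{i\in\omega}$ of positive reals with $\lim_{i\to\infty}r_i=1$. In cases (2) and (3) the initial block of zeroes may be empty.
   Context: $\omega$ denotes the set of nonnegative integers and $\omega^B$ the set of functions $B\to\omega$, ordered pointwise. $M\subseteq\omega^B$ is an upper set if $f\in M$ and $f\le g$ imply $g\in M$. For $T\in\omega$, $\mu_T$ is the probability measure on $\omega^B$ that is uniform on $\{f\in\omega^B:\sum_{b\in B}f(b)=T\}$ and zero elsewhere. *)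

theory Defs
  imports "HOL-Probability.Probability"
begin

definition omega_fun :: "'b set \<Rightarrow> ('b \<Rightarrow> nat) set" where
  "omega_fun B = B \<rightarrow>\<^sub>E (UNIV :: nat set)"

definition upper_set :: "'b set \<Rightarrow> ('b \<Rightarrow> nat) set \<Rightarrow> bool" where
  "upper_set B M \<longleftrightarrow> M \<subseteq> omega_fun B \<and>
     (\<forall>f\<in>M. \<forall>g\<in>omega_fun B. (\<forall>b\<in>B. f b \<le> g b) \<longrightarrow> g \<in> M)"

definition level :: "'b set \<Rightarrow> nat \<Rightarrow> ('b \<Rightarrow> nat) set" where
  "level B T = {f \<in> omega_fun B. (\<Sum>b\<in>B. f b) = T}"

definition mu :: "'b set \<Rightarrow> nat \<Rightarrow> ('b \<Rightarrow> nat) pmf" where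
  "mu B T = pmf_of_set (level B T)"

end

theory Submission
  imports Defs "HOL-Real_Asymp.Real_Asymp"
begin

text \<open>
  Write \<open>L\<^sub>T\<close> for the support of \<open>\<mu>\<^sub>T\<close>, \<open>n = |B|\<close>, and \<open>f + e\<^sub>b\<close> for \<open>f\<close> raised by
  one at \<open>b\<close>. For \<open>S \<subseteq> L\<^sub>T\<^sub>+\<^sub>1\<close>, counting the pairs \<open>(f, b) \<in> L\<^sub>T \<times> B\<close> with
  \<open>f + e\<^sub>b \<in> S\<close>, each with weight \<open>f b + 1\<close>, gives \<open>(T + 1)|S|\<close>, since the weights of the
  pairs leading to a fixed \<open>g\<close> are the values \<open>g b\<close>. Taking \<open>S = L\<^sub>T\<^sub>+\<^sub>1\<close> gives
  \<open>(T + 1)|L\<^sub>T\<^sub>+\<^sub>1| = (T + n)|L\<^sub>T|\<close>; taking \<open>S = L\<^sub>T\<^sub>+\<^sub>1 \<inter> M\<close> shows that \<open>\<mu>\<^sub>T\<^sub>+\<^sub>1(M)\<close>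
  exceeds \<open>\<mu>\<^sub>T(M)\<close> by the normalised weight of the boundary pairs (\<open>f \<notin> M\<close>, \<open>f + e\<^sub>b \<in> M\<close>),
  and a boundary pair exists as soon as \<open>L\<^sub>T\<close> meets both \<open>M\<close> and its complement. So the
  sequence is non-decreasing, and strictly increasing while strictly between 0 and 1. If
  \<open>f\<^sub>0 \<in> M\<close> has sum \<open>s\<close>, translation by \<open>f\<^sub>0\<close> embeds \<open>L\<^sub>T\<close> into \<open>L\<^sub>T\<^sub>+\<^sub>s \<inter> M\<close>, and
  \<open>|L\<^sub>T| / |L\<^sub>T\<^sub>+\<^sub>s| \<longrightarrow> 1\<close>, so the sequence tends to 1. Such a sequence has one of the
  three stated shapes.
\<close>

lemma omega_fun_iff: "f \<in> omega_fun B \<longleftrightarrow> (\<forall>x. x \<notin> B \<longrightarrow> f x = undefined)"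
  by (auto simp: omega_fun_def PiE_iff extensional_def)

lemma sum_fun_upd_add:
  assumes "finite B" "b \<in> B"
  shows "sum (f(b := v)) B + f b = sum f B + (v::nat)"
  using assms by (simp add: sum.remove)

lemma finite_level:
  assumes "finite B"
  shows "finite (level B T)"
proof -
  have "level B T \<subseteq> B \<rightarrow>\<^sub>E {..T}"
  proof
    fix f assume f: "f \<in> level B T"
    then have "\<forall>b\<in>B. f b \<le> T"
      using assms by (auto simp: level_def intro!: member_le_sum)
    with f show "f \<in> B \<rightarrow>\<^sub>E {..T}"
      by (auto simp: level_def omega_fun_def PiE_iff)
  qed
  then show ?thesis
    using assms by (meson finite_PiE finite_atMost finite_subset)
qed

lemma level_nonempty:
  assumes "finite B" "B \<noteq> {}"
  shows "level B T \<noteq> {}"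
proof -
  obtain b0 where b0: "b0 \<in> B"
    using assms by auto
  define f where "f x = (if x \<in> B then if x = b0 then T else 0 else undefined)" for x
  have "sum f B = (\<Sum>x\<in>B. if x = b0 then T else 0)"
    by (rule sum.cong) (auto simp: f_def)
  also have "\<dots> = T"
    using b0 assms by simp
  finally have "f \<in> level B T"
    by (auto simp: level_def omega_fun_iff f_def)
  then show ?thesis
    by auto
qed

lemma card_level_pos:
  assumes "finite B" "B \<noteq> {}"
  shows "card (level B T) > 0"
  using finite_level[OF assms(1)] level_nonempty[OF assms] by (simp add: card_gt_0_iff)

lemma fun_upd_Suc_in_level:
  assumes "finite B" "b \<in> B" "f \<in> level B T"
  shows "f(b := f b + 1) \<in> level B (Suc T)"
  using assms sum_fun_upd_add[OF assms(1,2), of f "f b + 1"]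
  by (auto simp: level_def omega_fun_iff)

lemma fun_upd_pred_in_level:
  assumes "finite B" "b \<in> B" "g \<in> level B (Suc T)" "g b \<ge> 1"
  shows "g(b := g b - 1) \<in> level B T"
  using assms sum_fun_upd_add[OF assms(1,2), of g "g b - 1"]
  by (auto simp: level_def omega_fun_iff)

lemma upper_set_fun_upd_Suc:
  assumes "upper_set B M" "f \<in> M" "b \<in> B"
  shows "f(b := f b + 1) \<in> M"
proof -
  have "f \<in> omega_fun B"
    using assms unfolding upper_set_def by auto
  moreover have "f(b := f b + 1) \<in> omega_fun B"
    using calculation assms by (auto simp: omega_fun_iff)
  ultimately show ?thesis
    using assms unfolding upper_set_def by auto
qed

lemma upper_set_omega_fun: "upper_set B (omega_fun B)"
  by (simp add: upper_set_def)

lemma fun_upd_Suc_cancel: "f(b := Suc (f b)) = g(b := Suc (g b)) \<longleftrightarrow> f = (g :: 'a \<Rightarrow> nat)"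
  unfolding fun_eq_iff by (metis Suc_inject fun_upd_apply)

lemma inj_fun_upd_Suc: "inj (\<lambda>(f::'a \<Rightarrow> nat, b). (f(b := f b + 1), b))"
  by (auto intro!: injI simp: fun_upd_Suc_cancel)

lemma weighted_raise_count:
  assumes fin: "finite B" and S: "S \<subseteq> level B (Suc T)"
  shows "(\<Sum>f\<in>level B T. \<Sum>b\<in>B. if f(b := f b + 1) \<in> S then f b + 1 else 0)
         = Suc T * card S"
proof -
  define h where "h = (\<lambda>(f::'a \<Rightarrow> nat, b). (f(b := f b + 1), b))"
  define F where "F = (\<lambda>(g::'a \<Rightarrow> nat, b). if g \<in> S then g b else 0)"
  have inj: "inj_on h (level B T \<times> B)"
    unfolding h_def by (rule inj_on_subset[OF inj_fun_upd_Suc]) simp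
  have img: "h ` (level B T \<times> B) \<subseteq> level B (Suc T) \<times> B"
    using fun_upd_Suc_in_level[OF fin] by (auto simp: h_def)
  have outside_img: "F x = 0" if x: "x \<in> level B (Suc T) \<times> B - h ` (level B T \<times> B)" for x
  proof (rule ccontr)
    obtain g b where xg: "x = (g, b)"
      by (cases x)
    assume "F x \<noteq> 0"
    then have "g b \<ge> 1"
      by (auto simp: F_def xg split: if_splits)
    then have "x = h (g(b := g b - 1), b)" and "g(b := g b - 1) \<in> level B T"
      using fun_upd_pred_in_level[OF fin] x by (auto simp: h_def xg)
    with x show False
      by (auto simp: xg)
  qed
  have "(\<Sum>f\<in>level B T. \<Sum>b\<in>B. if f(b := f b + 1) \<in> S then f b + 1 else 0)
      = (\<Sum>x\<in>level B T \<times> B. F (h x))"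
    unfolding sum.cartesian_product by (rule sum.cong) (auto simp: F_def h_def)
  also have "\<dots> = sum F (h ` (level B T \<times> B))"
    by (simp only: sum.reindex[OF inj] comp_def)
  also have "\<dots> = sum F (level B (Suc T) \<times> B)"
    by (rule sum.mono_neutral_left) (use img outside_img fin finite_level[OF fin] in auto)
  also have "\<dots> = (\<Sum>g\<in>level B (Suc T). if g \<in> S then Suc T else 0)"
    unfolding sum.cartesian_product[symmetric] F_def
    by (rule sum.cong) (auto simp: level_def)
  also have "\<dots> = Suc T * card S"
    using S finite_level[OF fin] by (simp add: sum.If_cases Int_absorb1)
  finally show ?thesis .
qed

definition boundary_weight :: "'b set \<Rightarrow> ('b \<Rightarrow> nat) set \<Rightarrow> nat \<Rightarrow> nat" where
  "boundary_weight B M T =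
     (\<Sum>f\<in>level B T - M. \<Sum>b\<in>B. if f(b := f b + 1) \<in> M then f b + 1 else 0)"

lemma card_level_Suc_Int:
  assumes fin: "finite B" and up: "upper_set B M"
  shows "Suc T * card (level B (Suc T) \<inter> M)
       = (T + card B) * card (level B T \<inter> M) + boundary_weight B M T"
proof -
  define G where
    "G f = (\<Sum>b\<in>B. if f(b := f b + 1) \<in> level B (Suc T) \<inter> M then f b + 1 else 0)" for f
  have inside: "G f = T + card B" if f: "f \<in> level B T \<inter> M" for f
  proof -
    have "G f = (\<Sum>b\<in>B. f b + 1)"
      unfolding G_def
      by (rule sum.cong) (use fun_upd_Suc_in_level[OF fin] upper_set_fun_upd_Suc[OF up] f in auto)
    with f show ?thesis
      by (simp add: sum_Suc level_def)
  qed
  have outside: "sum G (level B T - M) = boundary_weight B M T"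
    unfolding boundary_weight_def G_def
    by (intro sum.cong refl) (use fun_upd_Suc_in_level[OF fin] in auto)
  have "Suc T * card (level B (Suc T) \<inter> M) = sum G (level B T)"
    using weighted_raise_count[OF fin, of "level B (Suc T) \<inter> M" T] by (simp add: G_def)
  also have "\<dots> = sum G (level B T \<inter> M) + sum G (level B T - M)"
    using finite_level[OF fin] by (simp add: sum.Int_Diff)
  finally show ?thesis
    using inside outside by simp
qed

lemma card_level_Suc:
  assumes "finite B"
  shows "Suc T * card (level B (Suc T)) = (T + card B) * card (level B T)"
proof -
  have inter: "level B T' \<inter> omega_fun B = level B T'"
    and diff: "level B T' - omega_fun B = {}" for T'
    by (auto simp: level_def)
  show ?thesis
    using card_level_Suc_Int[OF assms upper_set_omega_fun, of T]
    by (simp add: boundary_weight_def inter diff)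
qed

lemma level_exchange:
  assumes fin: "finite B" and f: "f \<in> level B T" and g: "g \<in> level B T"
    and a: "a \<in> B" "g a < f a"
  obtains c where "c \<in> B" "c \<noteq> a" "f c < g c" "g(a := g a + 1, c := g c - 1) \<in> level B T"
proof -
  obtain c where c: "c \<in> B" "f c < g c"
    using sum_strict_mono_ex1[OF fin, of g f] f g a by (force simp: level_def)
  moreover have "c \<noteq> a"
    using a c by auto
  moreover have "g(a := g a + 1, c := g c - 1) \<in> level B T"
    using fun_upd_pred_in_level[OF fin c(1) fun_upd_Suc_in_level[OF fin a(1) g]] c \<open>c \<noteq> a\<close>
    by simp
  ultimately show ?thesis
    using that by blast
qed

text \<open>
  Moving a point of \<open>L\<^sub>T - M\<close> one unit towards a point of \<open>L\<^sub>T \<inter> M\<close> keeps it in \<open>L\<^sub>T\<close>;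
  the first time it enters \<open>M\<close> we have found a boundary pair.
\<close>

lemma level_boundary_exists:
  assumes fin: "finite B" and up: "upper_set B M"
    and f: "f \<in> level B T \<inter> M" and g: "g \<in> level B T - M"
  shows "\<exists>h\<in>level B T - M. \<exists>b\<in>B. h(b := h b + 1) \<in> M"
  using g
proof (induction "\<Sum>b\<in>B. f b - g b" arbitrary: g rule: less_induct)
  case less
  show ?case
  proof (cases "\<forall>b\<in>B. f b \<le> g b")
    case True
    then have "g \<in> M"
      using f less.prems up unfolding upper_set_def level_def by auto
    with less.prems show ?thesis
      by auto
  next
    case False
    then obtain a where a: "a \<in> B" "g a < f a"
      by auto
    obtain c where c: "c \<in> B" "c \<noteq> a" "f c < g c"
      and exchange: "g(a := g a + 1, c := g c - 1) \<in> level B T"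
      by (rule level_exchange[OF fin IntD1[OF f] DiffD1[OF less.prems] a])
    define g' where "g' = g(a := g a + 1, c := g c - 1)"
    from exchange have g'_level: "g' \<in> level B T"
      unfolding g'_def .
    show ?thesis
    proof (cases "g' \<in> M")
      case True
      have "g(a := g a + 1) \<in> M"
        using up True fun_upd_Suc_in_level[OF fin a(1), of g T] less.prems c(2)
        unfolding upper_set_def level_def g'_def by auto
      with less.prems a show ?thesis
        by blast
    next
      case False
      have "f a - g' a < f a - g a" and "\<forall>b\<in>B. f b - g' b \<le> f b - g b"
        using a c by (auto simp: g'_def)
      then have "(\<Sum>b\<in>B. f b - g' b) < (\<Sum>b\<in>B. f b - g b)"
        using a fin by (meson sum_strict_mono_ex1)
      then show ?thesis
        by (rule less.hyps) (use g'_level False in auto)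
    qed
  qed
qed

lemma boundary_weight_pos:
  assumes fin: "finite B" and up: "upper_set B M"
    and "f \<in> level B T \<inter> M" "g \<in> level B T - M"
  shows "boundary_weight B M T > 0"
proof -
  obtain h b where h: "h \<in> level B T - M" and b: "b \<in> B" and hb: "h(b := h b + 1) \<in> M"
    using level_boundary_exists[OF assms] by blast
  have "0 < (\<Sum>b\<in>B. if h(b := h b + 1) \<in> M then h b + 1 else 0)"
    using b hb fin by (intro sum_pos2[of _ b]) auto
  also have "\<dots> \<le> boundary_weight B M T"
    unfolding boundary_weight_def
    by (rule member_le_sum) (use h finite_level[OF fin] in auto)
  finally show ?thesis .
qed

definition level_density :: "'b set \<Rightarrow> ('b \<Rightarrow> nat) set \<Rightarrow> nat \<Rightarrow> real" where
  "level_density B M T = card (level B T \<inter> M) / card (level B T)"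

lemma prob_mu_eq_level_density:
  assumes "finite B" "B \<noteq> {}"
  shows "measure_pmf.prob (mu B T) M = level_density B M T"
  unfolding mu_def level_density_def
  by (rule measure_pmf_of_set[OF level_nonempty[OF assms] finite_level[OF assms(1)]])

lemma level_density_bounds:
  assumes "finite B"
  shows "0 \<le> level_density B M T" "level_density B M T \<le> 1"
proof -
  have "card (level B T \<inter> M) \<le> card (level B T)"
    by (rule card_mono) (use finite_level[OF assms] in auto)
  then show "0 \<le> level_density B M T" "level_density B M T \<le> 1"
    by (auto simp: level_density_def divide_le_eq_1)
qed

lemma level_density_Suc:
  assumes fin: "finite B" and ne: "B \<noteq> {}" and up: "upper_set B M"
  shows "level_density B M (Suc T)
       = level_density B M T + boundary_weight B M T / ((T + card B) * card (level B T))"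
proof -
  define l where "l = card (level B T)"
  define c where "c = card (level B T \<inter> M)"
  have TB_pos: "T + card B > 0"
    using fin ne by (simp add: card_gt_0_iff)
  have "level_density B M (Suc T)
      = real (Suc T * card (level B (Suc T) \<inter> M)) / real (Suc T * card (level B (Suc T)))"
    unfolding level_density_def of_nat_mult by (rule mult_divide_mult_cancel_left[symmetric]) simp
  also have "\<dots> = real ((T + card B) * c + boundary_weight B M T) / real ((T + card B) * l)"
    by (simp only: card_level_Suc_Int[OF fin up] card_level_Suc[OF fin] c_def l_def)
  also have "\<dots> = real ((T + card B) * c) / real ((T + card B) * l)
      + boundary_weight B M T / real ((T + card B) * l)"
    by (simp add: add_divide_distrib)
  also have "\<dots> = c / l + boundary_weight B M T / ((T + card B) * l)"
    using TB_pos unfolding of_nat_mult by (auto simp: add_nonneg_eq_0_iff)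
  finally show ?thesis
    by (simp add: level_density_def c_def l_def)
qed

lemma level_density_Suc_mono:
  assumes "finite B" "B \<noteq> {}" "upper_set B M"
  shows "level_density B M T \<le> level_density B M (Suc T)"
  using level_density_Suc[OF assms, of T] by simp

lemma level_density_Suc_strict:
  assumes fin: "finite B" and ne: "B \<noteq> {}" and up: "upper_set B M"
    and "0 < level_density B M T" "level_density B M T < 1"
  shows "level_density B M T < level_density B M (Suc T)"
proof -
  have "level B T \<inter> M \<noteq> {}"
    using assms(4) by (auto simp: level_density_def)
  moreover have "level B T - M \<noteq> {}"
  proof
    assume "level B T - M = {}"
    then have "level B T \<inter> M = level B T"
      by blast
    then show False
      using assms(5) card_level_pos[OF fin ne, of T] by (simp add: level_density_def)
  qed
  ultimately obtain f g where "f \<in> level B T \<inter> M" "g \<in> level B T - M"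
    by blast
  then have "boundary_weight B M T > 0"
    by (rule boundary_weight_pos[OF fin up])
  moreover have "0 < T + card B"
    using fin ne by (simp add: card_gt_0_iff)
  ultimately have "0 < boundary_weight B M T / ((T + card B) * card (level B T))"
    using card_level_pos[OF fin ne, of T] by (simp add: of_nat_mult[symmetric] del: of_nat_mult)
  then show ?thesis
    using level_density_Suc[OF fin ne up, of T] by simp
qed

lemma card_level_ratio_tendsto_1:
  assumes fin: "finite B" and ne: "B \<noteq> {}"
  shows "(\<lambda>T. card (level B T) / card (level B (T + s))) \<longlonglongrightarrow> 1"
proof (induction s)
  case 0
  show ?case
    by (simp add: card_level_pos[OF fin ne, THEN gr_implies_not0])
next
  case (Suc s)
  have step: "card (level B T) / card (level B (Suc T)) = Suc T / (T + card B)" for T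
  proof -
    have "real (Suc T) * card (level B (Suc T)) = real (T + card B) * card (level B T)"
      using card_level_Suc[OF fin, of T] by (metis of_nat_mult)
    moreover have "card (level B (Suc T)) \<noteq> 0" "T + card B \<noteq> 0"
      using card_level_pos[OF fin ne] fin ne by (auto simp: card_gt_0_iff)
    ultimately show ?thesis
      by (simp add: frac_eq_eq mult.commute del: of_nat_Suc of_nat_add)
  qed
  have "(\<lambda>T. Suc T / (T + card B)) \<longlonglongrightarrow> 1"
    by real_asymp
  then have "(\<lambda>T. card (level B (T + s)) / card (level B (Suc (T + s)))) \<longlonglongrightarrow> 1"
    unfolding step by (rule LIMSEQ_ignore_initial_segment[where k = s, simplified])
  from tendsto_mult[OF Suc.IH this] show ?case
    using card_level_pos[OF fin ne] by simp
qed

lemma card_level_le_card_level_add_Int: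
  assumes fin: "finite B" and up: "upper_set B M" and f0: "f0 \<in> M"
  shows "card (level B T) \<le> card (level B (T + sum f0 B) \<inter> M)"
proof -
  define shift where "shift g x = (if x \<in> B then g x + f0 x else undefined)" for g x
  have "inj_on shift (level B T)"
  proof (rule inj_onI, rule ext)
    fix g g' x
    assume g: "g \<in> level B T" and g': "g' \<in> level B T" and eq: "shift g = shift g'"
    show "g x = g' x"
      using g g' fun_cong[OF eq, of x]
      by (cases "x \<in> B") (auto simp: shift_def level_def omega_fun_iff)
  qed
  moreover have "shift ` level B T \<subseteq> level B (T + sum f0 B) \<inter> M"
  proof clarify
    fix g assume g: "g \<in> level B T"
    have omega: "shift g \<in> omega_fun B"
      by (simp add: shift_def omega_fun_iff)
    have "sum (shift g) B = sum (\<lambda>x. g x + f0 x) B"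
      by (rule sum.cong) (auto simp: shift_def)
    with g omega have "shift g \<in> level B (T + sum f0 B)"
      by (simp add: sum.distrib level_def)
    moreover have "shift g \<in> M"
      using up f0 omega unfolding upper_set_def by (auto simp: shift_def)
    ultimately show "shift g \<in> level B (T + sum f0 B) \<inter> M"
      by simp
  qed
  moreover have "finite (level B (T + sum f0 B) \<inter> M)"
    using finite_level[OF fin] by simp
  ultimately show ?thesis
    by (rule card_inj_on_le)
qed

lemma level_density_tendsto_1:
  assumes fin: "finite B" and ne: "B \<noteq> {}" and up: "upper_set B M" and "M \<noteq> {}"
  shows "level_density B M \<longlonglongrightarrow> 1"
proof -
  obtain f0 where f0: "f0 \<in> M"
    using assms by auto
  define s where "s = sum f0 B"
  have "(\<lambda>T. level_density B M (T + s)) \<longlonglongrightarrow> 1"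
  proof (rule tendsto_sandwich[OF _ _ card_level_ratio_tendsto_1[OF fin ne, of s] tendsto_const])
    show "\<forall>\<^sub>F T in sequentially. card (level B T) / card (level B (T + s)) \<le> level_density B M (T + s)"
      unfolding level_density_def s_def
      by (intro always_eventually allI divide_right_mono)
        (simp_all add: card_level_le_card_level_add_Int[OF fin up f0])
    show "\<forall>\<^sub>F T in sequentially. level_density B M (T + s) \<le> 1"
      using level_density_bounds[OF fin] by simp
  qed
  then show ?thesis
    by (rule LIMSEQ_offset)
qed

lemma incseq_threshold:
  fixes p :: "nat \<Rightarrow> 'a::order"
  assumes "incseq p" "mono Q" "\<exists>T. Q (p T)"
  obtains K where "\<And>T. Q (p T) \<longleftrightarrow> K \<le> T"
proof
  fix T
  show "Q (p T) \<longleftrightarrow> (LEAST T. Q (p T)) \<le> T"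
  proof
    show "(LEAST T. Q (p T)) \<le> T" if "Q (p T)"
      using that by (rule Least_le)
    show "Q (p T)" if "(LEAST T. Q (p T)) \<le> T"
      using LeastI_ex[OF assms(3)] incseqD[OF assms(1) that] monoD[OF assms(2)] by auto
  qed
qed

lemma incseq_strict_less:
  fixes p :: "nat \<Rightarrow> real"
  assumes "incseq p" and "\<And>T. 0 < p T \<Longrightarrow> p T < 1 \<Longrightarrow> p T < p (Suc T)"
    and "i < j" "0 < p i" "p i < 1"
  shows "p i < p j"
proof -
  have "p i < p (Suc i)"
    using assms(2,4,5) .
  also have "\<dots> \<le> p j"
    using assms(1,3) by (simp add: incseqD)
  finally show ?thesis .
qed

lemma unit_sequence_cases:
  fixes p :: "nat \<Rightarrow> real"
  assumes bounds: "\<And>T. 0 \<le> p T" "\<And>T. p T \<le> 1"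
    and inc: "incseq p"
    and strict: "\<And>T. 0 < p T \<Longrightarrow> p T < 1 \<Longrightarrow> p T < p (Suc T)"
    and lim: "p \<longlonglongrightarrow> 1"
  shows "(\<exists>(K::nat) (N::nat) (r::nat \<Rightarrow> real).
        (\<forall>i<N. 0 < r i \<and> r i < 1) \<and> (\<forall>i j. i < j \<and> j < N \<longrightarrow> r i < r j) \<and>
        (\<forall>T. p T = (if T < K then 0 else if T < K + N then r (T - K) else 1)))
   \<or> (\<exists>(K::nat) (r::nat \<Rightarrow> real).
        (\<forall>i. 0 < r i) \<and> strict_mono r \<and> r \<longlonglongrightarrow> 1 \<and>
        (\<forall>T. p T = (if T < K then 0 else r (T - K))))"
proof -
  have "mono (\<lambda>x::real. 0 < x)" "mono (\<lambda>x::real. 1 \<le> x)"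
    by (auto simp: mono_def)
  note thresholds = incseq_threshold[OF inc this(1)] incseq_threshold[OF inc this(2)]
  have "\<exists>T. 0 < p T"
    using order_tendstoD(1)[OF lim, of 0] by (auto simp: eventually_sequentially)
  then obtain K where pos: "\<And>T. 0 < p T \<longleftrightarrow> K \<le> T"
    using thresholds(1) by blast
  have zero: "p T = 0" if "T < K" for T
    using pos[of T] bounds(1)[of T] that by linarith
  show ?thesis
  proof (cases "\<exists>T. 1 \<le> p T")
    case True
    then obtain J where one: "\<And>T. 1 \<le> p T \<longleftrightarrow> J \<le> T"
      using thresholds(2) by blast
    have "K \<le> J"
      using pos[of J] one[of J] by linarith
    define r where "r i = p (K + i)" for i
    have "\<forall>i<J - K. 0 < r i \<and> r i < 1"
      using pos one by (auto simp: r_def not_le[symmetric])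
    moreover have "\<forall>i j. i < j \<and> j < J - K \<longrightarrow> r i < r j"
      using incseq_strict_less[OF inc strict] pos one by (auto simp: r_def not_le[symmetric])
    moreover have "p T = (if T < K then 0 else if T < K + (J - K) then r (T - K) else 1)" for T
      using zero one[of T] bounds(2)[of T] \<open>K \<le> J\<close> by (auto simp: r_def)
    ultimately show ?thesis
      by blast
  next
    case False
    define r where "r i = p (i + K)" for i
    have "\<forall>i. 0 < r i"
      using pos by (simp add: r_def)
    moreover have "strict_mono r"
      unfolding strict_mono_def r_def using incseq_strict_less[OF inc strict] pos False
      by (simp add: not_le)
    moreover have "r \<longlonglongrightarrow> 1"
      unfolding r_def by (rule LIMSEQ_ignore_initial_segment[OF lim])
    moreover have "\<forall>T. p T = (if T < K then 0 else r (T - K))"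
      using zero by (simp add: r_def)
    ultimately show ?thesis
      by blast
  qed
qed

theorem theorem6:
  fixes B :: "'b set" and M :: "('b \<Rightarrow> nat) set"
  assumes "finite B" and "B \<noteq> {}" and "upper_set B M"
  shows "(M = {} \<and> (\<forall>T. measure_pmf.prob (mu B T) M = 0))
   \<or> (\<exists>(K::nat) (N::nat) (r::nat \<Rightarrow> real).
        (\<forall>i<N. 0 < r i \<and> r i < 1) \<and> (\<forall>i j. i < j \<and> j < N \<longrightarrow> r i < r j) \<and>
        (\<forall>T. measure_pmf.prob (mu B T) M =
               (if T < K then 0 else if T < K + N then r (T - K) else 1)))
   \<or> (\<exists>(K::nat) (r::nat \<Rightarrow> real).
        (\<forall>i. 0 < r i) \<and> strict_mono r \<and> r \<longlonglongrightarrow> 1 \<and>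
        (\<forall>T. measure_pmf.prob (mu B T) M = (if T < K then 0 else r (T - K))))"
proof (cases "M = {}")
  case True
  then show ?thesis
    by simp
next
  case False
  have "incseq (level_density B M)"
    using level_density_Suc_mono[OF assms] by (rule incseq_SucI)
  then show ?thesis
    unfolding prob_mu_eq_level_density[OF assms(1,2)]
    using unit_sequence_cases[of "level_density B M"] level_density_bounds[OF assms(1)]
      level_density_Suc_strict[OF assms] level_density_tendsto_1[OF assms False]
    by blast
qed

end
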